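(* Let $R_2=\sup_{p\ge0}p\,\big(1-F(2p)\big)$, the maximal revenue from offering one positional good at price $p$ in addition to a free low-level position. Then $$R_2\ \ge\ \tfrac12\sup_{s\in\mathcal S(0)}\int_0^{\bar\theta}J(\theta)s(\theta)\,dF(\theta).$$
   Context: Let $0<\bar\theta<\infty$, $\Theta=[0,\bar\theta]$, $F$ a cdf on $\Theta$ with continuous, strictly positive density $f$, $dF=f\,d\theta$, extended by $F(x)=1$ for $x\ge\bar\theta$; $J(\theta)=\theta-\frac{1-F(\theta)}{f(\theta)}$. For bounded measurable $a,b$ on $\Theta$, write $b\in\mathrm{MPS}(a)$ if $\int_x^{\bar\theta}b\,dF\le\int_x^{\bar\theta}a\,dF$ for all $x\in\Theta$, with equality at $x=0$. $\mathcal S(0)$ is the set of nondecreasing $s:\Theta\to[0,1]$ with $s\in\mathrm{MPS}(F)$. The supremum on the right is the maximal revenue when exclusion is impossible. *)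

theory Defs
  imports "HOL-Analysis.Analysis"
begin

definition virt_val :: "(real \<Rightarrow> real) \<Rightarrow> (real \<Rightarrow> real) \<Rightarrow> real \<Rightarrow> real" where
  "virt_val F f \<theta> = \<theta> - (1 - F \<theta>) / f \<theta>"

definition MPS :: "real \<Rightarrow> (real \<Rightarrow> real) \<Rightarrow> (real \<Rightarrow> real) \<Rightarrow> (real \<Rightarrow> real) \<Rightarrow> bool" where
  "MPS \<theta>bar f a b \<longleftrightarrow>
     (\<forall>x\<in>{0..\<theta>bar}. integral {x..\<theta>bar} (\<lambda>t. b t * f t) \<le> integral {x..\<theta>bar} (\<lambda>t. a t * f t))
     \<and> integral {0..\<theta>bar} (\<lambda>t. b t * f t) = integral {0..\<theta>bar} (\<lambda>t. a t * f t)"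

definition S0 :: "real \<Rightarrow> (real \<Rightarrow> real) \<Rightarrow> (real \<Rightarrow> real) \<Rightarrow> (real \<Rightarrow> real) set" where
  "S0 \<theta>bar F f = {s. mono_on {0..\<theta>bar} s \<and> (\<forall>\<theta>\<in>{0..\<theta>bar}. 0 \<le> s \<theta> \<and> s \<theta> \<le> 1)
                      \<and> MPS \<theta>bar f F s}"

end

theory Submission
  imports Defs
begin

text \<open>The revenue curve \<open>G \<theta> = \<theta> (1 - F \<theta>)\<close> satisfies \<open>J \<theta> f \<theta> = -G' \<theta>\<close> and vanishes at
  both ends of \<open>\<Theta>\<close>. For nondecreasing \<open>s\<close>, Bonnet's second mean value theorem therefore gives
  \<open>\<integral> J s dF = (s \<theta>bar - s 0) G c \<le> G c\<close> for some \<open>c\<close>; note that only monotonicity and the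
  range \<open>[0,1]\<close> of \<open>s\<close> are used, not the majorization constraint. Finally
  \<open>G c = 2 (c/2) (1 - F (2 (c/2))) \<le> 2 R\<^sub>2\<close>.\<close>

lemma
  fixes f F :: "real \<Rightarrow> real"
  assumes f_cont: "continuous_on {0..b} f"
    and f_nonneg: "\<forall>x\<in>{0..b}. 0 \<le> f x"
    and F_eq: "\<forall>x\<in>{0..b}. F x = integral {0..x} f"
  shows cdf_nonneg: "x \<in> {0..b} \<Longrightarrow> 0 \<le> F x"
    and cdf_mono_on: "mono_on {0..b} F"
    and cdf_has_real_derivative:
      "x \<in> {0..b} \<Longrightarrow> (F has_real_derivative f x) (at x within {0..b})"
proof -
  have f_int: "f integrable_on {0..x}" if "x \<in> {0..b}" for x
    using that continuous_on_subset[OF f_cont, of "{0..x}"] integrable_continuous_real by auto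
  show "0 \<le> F x" if "x \<in> {0..b}"
    using that F_eq f_nonneg f_int integral_nonneg[of f "{0..x}"] by auto
  show "mono_on {0..b} F"
  proof (rule mono_onI)
    fix x y assume "x \<in> {0..b}" "y \<in> {0..b}" "x \<le> y"
    then show "F x \<le> F y"
      using F_eq f_nonneg f_int integral_subset_le[of "{0..x}" "{0..y}" f] by auto
  qed
  show "(F has_real_derivative f x) (at x within {0..b})" if x: "x \<in> {0..b}"
    unfolding has_real_derivative_iff_has_vector_derivative
    by (rule has_vector_derivative_transform_within
        [OF integral_has_vector_derivative[OF f_cont x], of 1]) (use x F_eq in auto)
qed

lemma cdf_le_one:
  fixes F :: "real \<Rightarrow> real"
  assumes "mono_on {0..b} F" "F b = 1" "x \<in> {0..b}"
  shows "F x \<le> 1"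
  using assms mono_onD[OF assms(1) assms(3), of b] by auto

lemma MPS_refl: "MPS \<theta>bar f a a"
  unfolding MPS_def by simp

lemma virt_val_mult_density:
  assumes "f \<theta> \<noteq> 0"
  shows "virt_val F f \<theta> * f \<theta> = \<theta> * f \<theta> - (1 - F \<theta>)"
  using assms unfolding virt_val_def by (simp add: field_simps)

lemma integral_mono_weight_le_antiderivative:
  fixes s h G :: "real \<Rightarrow> real"
  assumes "a \<le> b"
    and G_deriv: "\<And>x. x \<in> {a..b} \<Longrightarrow> (G has_real_derivative - h x) (at x within {a..b})"
    and "G a = 0" "G b = 0"
    and G_nonneg: "\<forall>x\<in>{a..b}. 0 \<le> G x"
    and s_mono: "mono_on {a..b} s" and "0 \<le> s a" "s b \<le> 1"
  obtains c where "c \<in> {a..b}" "integral {a..b} (\<lambda>x. s x * h x) \<le> G c"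
proof -
  have h_integral: "(h has_integral G x - G y) {x..y}" if "a \<le> x" "x \<le> y" "y \<le> b" for x y
  proof -
    have "((\<lambda>t. - h t) has_integral G y - G x) {x..y}"
    proof (intro fundamental_theorem_of_calculus)
      fix t assume "t \<in> {x..y}"
      with that G_deriv have "(G has_real_derivative - h t) (at t within {a..b})" by auto
      then show "(G has_vector_derivative - h t) (at t within {x..y})"
        using that
        by (auto simp: has_real_derivative_iff_has_vector_derivative[symmetric] intro: DERIV_subset)
    qed (use that in auto)
    from has_integral_neg[OF this] show ?thesis by simp
  qed
  have "h integrable_on {a..b}"
    using h_integral[of a b] \<open>a \<le> b\<close> by blast
  moreover have "s x \<le> s y" if "a \<le> x" "x \<le> y" "y \<le> b" for x y
    using that s_mono by (auto intro: mono_onD)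
  ultimately obtain c where c: "c \<in> {a..b}"
    and c_eq: "integral {a..b} (\<lambda>x. s x * h x) = s a * integral {a..c} h + s b * integral {c..b} h"
    using second_mean_value_theorem \<open>a \<le> b\<close> by blast
  have "integral {a..b} (\<lambda>x. s x * h x) = (s b - s a) * G c"
    using c c_eq h_integral[of a c] h_integral[of c b] \<open>G a = 0\<close> \<open>G b = 0\<close>
    by (auto simp: integral_unique algebra_simps)
  also have "\<dots> \<le> G c"
    using mult_right_mono[of "s b - s a" 1 "G c"] G_nonneg c \<open>0 \<le> s a\<close> \<open>s b \<le> 1\<close> by auto
  finally show ?thesis using c that by blast
qed

lemma revenue_le_twice_posted_price_revenue:
  fixes F :: "real \<Rightarrow> real"
  assumes F_nonneg: "\<forall>x\<ge>0. 0 \<le> F x" and F_eq_1: "\<forall>x\<ge>b. F x = 1" and "0 \<le> c"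
  shows "c * (1 - F c) \<le> 2 * (SUP p\<in>{0..}. p * (1 - F (2 * p)))"
proof -
  have "bdd_above ((\<lambda>p. p * (1 - F (2 * p))) ` {0..})"
  proof (rule bdd_aboveI2)
    fix p :: real assume "p \<in> {0..}"
    then have "0 \<le> p" by simp
    show "p * (1 - F (2 * p)) \<le> max b 0"
    proof (cases "b \<le> 2 * p")
      case True then show ?thesis using F_eq_1 by auto
    next
      case False
      then have "p * (1 - F (2 * p)) \<le> p * 1"
        using \<open>0 \<le> p\<close> F_nonneg by (intro mult_left_mono) auto
      then show ?thesis using False by linarith
    qed
  qed
  then have "c/2 * (1 - F (2 * (c/2))) \<le> (SUP p\<in>{0..}. p * (1 - F (2 * p)))"
    using \<open>0 \<le> c\<close> by (intro cSUP_upper) auto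
  then show ?thesis by simp
qed

lemma virtual_surplus_le_revenue:
  fixes f F s :: "real \<Rightarrow> real"
  assumes "0 \<le> b"
    and f_cont: "continuous_on {0..b} f"
    and f_pos: "\<forall>x\<in>{0..b}. 0 < f x"
    and F_eq: "\<forall>x\<in>{0..b}. F x = integral {0..x} f"
    and "F b = 1"
    and s_mono: "mono_on {0..b} s" and "0 \<le> s 0" "s b \<le> 1"
  obtains c where "c \<in> {0..b}"
    "integral {0..b} (\<lambda>\<theta>. virt_val F f \<theta> * s \<theta> * f \<theta>) \<le> c * (1 - F c)"
proof -
  define G where "G \<theta> = \<theta> * (1 - F \<theta>)" for \<theta>
  have f_nonneg: "\<forall>x\<in>{0..b}. 0 \<le> f x"
    using f_pos less_imp_le by blast
  have G_deriv: "(G has_real_derivative - (x * f x - (1 - F x))) (at x within {0..b})"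
    if "x \<in> {0..b}" for x
  proof -
    have "((\<lambda>\<theta>. \<theta> * (1 - F \<theta>)) has_real_derivative 1 * (1 - F x) + (0 - f x) * x)
        (at x within {0..b})"
      by (intro DERIV_mult DERIV_ident DERIV_diff DERIV_const
          cdf_has_real_derivative[OF f_cont f_nonneg F_eq] that)
    then show ?thesis unfolding G_def by (simp add: algebra_simps)
  qed
  have G_endpoints: "G 0 = 0" "G b = 0"
    using \<open>F b = 1\<close> by (auto simp: G_def)
  have G_nonneg: "\<forall>x\<in>{0..b}. 0 \<le> G x"
    using cdf_le_one[OF cdf_mono_on[OF f_cont f_nonneg F_eq] \<open>F b = 1\<close>] by (simp add: G_def)
  obtain c where c: "c \<in> {0..b}"
    and bound: "integral {0..b} (\<lambda>\<theta>. s \<theta> * (\<theta> * f \<theta> - (1 - F \<theta>))) \<le> G c"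
    using integral_mono_weight_le_antiderivative[OF \<open>0 \<le> b\<close> G_deriv G_endpoints G_nonneg
        s_mono \<open>0 \<le> s 0\<close> \<open>s b \<le> 1\<close>] by auto
  have "integral {0..b} (\<lambda>\<theta>. virt_val F f \<theta> * s \<theta> * f \<theta>)
      = integral {0..b} (\<lambda>\<theta>. s \<theta> * (\<theta> * f \<theta> - (1 - F \<theta>)))"
  proof (rule integral_cong)
    fix \<theta> assume "\<theta> \<in> {0..b}"
    then have "f \<theta> \<noteq> 0" using f_pos by fastforce
    then show "virt_val F f \<theta> * s \<theta> * f \<theta> = s \<theta> * (\<theta> * f \<theta> - (1 - F \<theta>))"
      using virt_val_mult_density[of f \<theta> F] by (simp add: ac_simps)
  qed
  with c bound that show ?thesis unfolding G_def by auto
qed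

theorem mainTheorem13:
  fixes \<theta>bar :: real and F f :: "real \<Rightarrow> real"
  assumes "0 < \<theta>bar"
    and "continuous_on {0..\<theta>bar} f"
    and "\<forall>\<theta>\<in>{0..\<theta>bar}. 0 < f \<theta>"
    and "\<forall>x\<in>{0..\<theta>bar}. F x = integral {0..x} f"
    and "\<forall>x\<ge>\<theta>bar. F x = 1"
  shows "(SUP p\<in>{0..}. p * (1 - F (2 * p)))
           \<ge> 1/2 * (SUP s\<in>S0 \<theta>bar F f. integral {0..\<theta>bar} (\<lambda>\<theta>. virt_val F f \<theta> * s \<theta> * f \<theta>))"
proof -
  let ?R2 = "SUP p\<in>{0..}. p * (1 - F (2 * p))"
  have f_nonneg: "\<forall>\<theta>\<in>{0..\<theta>bar}. 0 \<le> f \<theta>"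
    using assms(3) less_imp_le by blast
  note F_nonneg = cdf_nonneg[OF assms(2) f_nonneg assms(4)]
    and F_mono = cdf_mono_on[OF assms(2) f_nonneg assms(4)]
  have F_le_1: "\<forall>x\<in>{0..\<theta>bar}. F x \<le> 1"
    using cdf_le_one[OF F_mono] assms(1,5) by simp
  have F_nonneg_everywhere: "\<forall>x\<ge>0. 0 \<le> F x"
    using F_nonneg assms(5) by (metis atLeastAtMost_iff nle_le zero_le_one)
  have objective_le: "integral {0..\<theta>bar} (\<lambda>\<theta>. virt_val F f \<theta> * s \<theta> * f \<theta>) \<le> 2 * ?R2"
    if s_in: "s \<in> S0 \<theta>bar F f" for s
  proof -
    obtain c where "c \<in> {0..\<theta>bar}"
      "integral {0..\<theta>bar} (\<lambda>\<theta>. virt_val F f \<theta> * s \<theta> * f \<theta>) \<le> c * (1 - F c)"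
      by (rule virtual_surplus_le_revenue[where s = s, OF _ assms(2,3,4)])
         (use s_in assms(1,5) in \<open>auto simp: S0_def\<close>)
    then show ?thesis
      using revenue_le_twice_posted_price_revenue[OF F_nonneg_everywhere assms(5)] by force
  qed
  have "F \<in> S0 \<theta>bar F f"
    unfolding S0_def using F_nonneg F_mono F_le_1 by (simp add: MPS_refl)
  then have "(SUP s\<in>S0 \<theta>bar F f. integral {0..\<theta>bar} (\<lambda>\<theta>. virt_val F f \<theta> * s \<theta> * f \<theta>)) \<le> 2 * ?R2"
    using objective_le by (blast intro: cSUP_least)
  then show ?thesis by simp
qed

end
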